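(* Let $n\in\mathbb{N}$, let $I$ be a closed interval, and let $f_j\in\mathscr{E}'(I)$ for $j\in\mathbb{Z}_n$. Then there exists $\alpha\in\mathbb{C}$ with $\alpha^n=1$ such that \[ \inf\mathop{\rm supp}\sum_{j\in\mathbb{Z}_n}\alpha^j f_j=\min_{j\in\mathbb{Z}_n}\inf\mathop{\rm supp} f_j . \]
   Context: $\mathbb{Z}_n=\mathbb{Z}\bmod n$. $\mathscr{E}'(I)$ denotes distributions on $\mathbb{R}$ supported in $I$ (equivalently, for an interval of $\mathbb{T}$ identified with a lifted interval of $\mathbb{R}$). *)

theory Defs
  imports "HOL-Analysis.Analysis"
begin

fun nth_deriv :: "nat \<Rightarrow> (real \<Rightarrow> complex) \<Rightarrow> real \<Rightarrow> complex" where
  "nth_deriv 0 \<phi> = \<phi>"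
| "nth_deriv (Suc k) \<phi> = (\<lambda>x. vector_derivative (nth_deriv k \<phi>) (at x))"

definition smooth_fun :: "(real \<Rightarrow> complex) \<Rightarrow> bool" where
  "smooth_fun \<phi> \<longleftrightarrow>
     (\<forall>k x. (nth_deriv k \<phi> has_vector_derivative nth_deriv (Suc k) \<phi> x) (at x))"

definition tsupport :: "(real \<Rightarrow> complex) \<Rightarrow> real set" where
  "tsupport \<phi> = closure {x. \<phi> x \<noteq> 0}"

definition test_fun :: "(real \<Rightarrow> complex) \<Rightarrow> bool" where
  "test_fun \<phi> \<longleftrightarrow> smooth_fun \<phi> \<and> compact (tsupport \<phi>)"

text \<open>Distributions on the real line: linear functionals on test functions which are
  continuous, i.e. bounded on each compact set by finitely many sup-seminorms of derivatives.\<close>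
definition distribution :: "((real \<Rightarrow> complex) \<Rightarrow> complex) \<Rightarrow> bool" where
  "distribution T \<longleftrightarrow>
     (\<forall>\<phi> \<psi> a b. test_fun \<phi> \<longrightarrow> test_fun \<psi> \<longrightarrow>
        T (\<lambda>x. a * \<phi> x + b * \<psi> x) = a * T \<phi> + b * T \<psi>) \<and>
     (\<forall>K. compact K \<longrightarrow> (\<exists>C N. \<forall>\<phi>. test_fun \<phi> \<longrightarrow> tsupport \<phi> \<subseteq> K \<longrightarrow>
        norm (T \<phi>) \<le> C * (\<Sum>k\<le>N. Sup (range (\<lambda>x. norm (nth_deriv k \<phi> x))))))"

definition dsupp :: "((real \<Rightarrow> complex) \<Rightarrow> complex) \<Rightarrow> real set" where
  "dsupp T = - {x. \<exists>e>0. \<forall>\<phi>. test_fun \<phi> \<longrightarrow> tsupport \<phi> \<subseteq> ball x e \<longrightarrow> T \<phi> = 0}"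

definition cs_distributions :: "real set \<Rightarrow> ((real \<Rightarrow> complex) \<Rightarrow> complex) set" where
  "cs_distributions I = {T. distribution T \<and> compact (dsupp T) \<and> dsupp T \<subseteq> I}"

text \<open>Infimum of the support, in the extended reals (\<open>+\<infinity>\<close> for the zero distribution).\<close>
definition inf_supp :: "((real \<Rightarrow> complex) \<Rightarrow> complex) \<Rightarrow> ereal" where
  "inf_supp T = Inf (ereal ` dsupp T)"

end

theory Submission
  imports Defs
begin

text \<open>Let \<open>\<omega> = exp(2\<pi>i/n)\<close> and \<open>g k = \<Sum>j<n. \<omega>^(jk) f j\<close>. Discrete Fourier inversion
  writes each \<open>f j\<close> back as a linear combination of the \<open>g k\<close>, and the support of a finite
  linear combination lies in the union of the supports. Hence every \<open>inf supp (g k)\<close> is at least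
  \<open>min\<^sub>j inf supp (f j)\<close> and every \<open>inf supp (f j)\<close> is at least \<open>min\<^sub>k inf supp (g k)\<close>, so
  \<open>\<alpha> = \<omega>^k\<close> for a minimising \<open>k\<close> works.\<close>

lemma not_in_dsupp_iff_eventually:
  "x \<notin> dsupp T \<longleftrightarrow>
     (\<forall>\<^sub>F e in at_right 0. \<forall>\<phi>. test_fun \<phi> \<longrightarrow> tsupport \<phi> \<subseteq> ball x e \<longrightarrow> T \<phi> = 0)"
  (is "_ \<longleftrightarrow> eventually ?P _")
proof
  assume "x \<notin> dsupp T"
  then obtain e where "e > 0" "?P e" by (auto simp: dsupp_def)
  then have "\<forall>d>0. d < e \<longrightarrow> ?P d"
    by (meson less_imp_le order_trans subset_ball)
  with \<open>e > 0\<close> show "eventually ?P (at_right 0)"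
    by (auto simp: eventually_at_right_field)
next
  assume "eventually ?P (at_right 0)"
  then obtain b where "b > 0" and P: "\<forall>d>0. d < b \<longrightarrow> ?P d"
    by (auto simp: eventually_at_right_field)
  have "b / 2 > 0" "b / 2 < b" using \<open>b > 0\<close> by simp_all
  with P have "?P (b / 2)" by blast
  with \<open>b > 0\<close> show "x \<notin> dsupp T"
    by (auto simp: dsupp_def intro!: exI[of _ "b / 2"])
qed

lemma dsupp_lincomb_subset:
  assumes "finite J"
  shows "dsupp (\<lambda>\<phi>. \<Sum>j\<in>J. c j * T j \<phi>) \<subseteq> (\<Union>j\<in>J. dsupp (T j))"
proof (rule subsetI, rule ccontr)
  fix x assume "x \<notin> (\<Union>j\<in>J. dsupp (T j))"
  then have "\<forall>\<^sub>F e in at_right 0. \<forall>j\<in>J.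
      \<forall>\<phi>. test_fun \<phi> \<longrightarrow> tsupport \<phi> \<subseteq> ball x e \<longrightarrow> T j \<phi> = 0"
    using assms by (simp add: eventually_ball_finite not_in_dsupp_iff_eventually)
  then have "x \<notin> dsupp (\<lambda>\<phi>. \<Sum>j\<in>J. c j * T j \<phi>)"
    unfolding not_in_dsupp_iff_eventually by (rule eventually_mono) simp
  moreover assume "x \<in> dsupp (\<lambda>\<phi>. \<Sum>j\<in>J. c j * T j \<phi>)"
  ultimately show False by contradiction
qed

lemma inf_supp_lincomb_ge:
  assumes "finite J"
  shows "(INF j\<in>J. inf_supp (T j)) \<le> inf_supp (\<lambda>\<phi>. \<Sum>j\<in>J. c j * T j \<phi>)"
  unfolding inf_supp_def
proof (rule Inf_greatest)
  fix y assume "y \<in> ereal ` dsupp (\<lambda>\<phi>. \<Sum>j\<in>J. c j * T j \<phi>)"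
  then obtain s j where "y = ereal s" "j \<in> J" "s \<in> dsupp (T j)"
    using dsupp_lincomb_subset[OF assms] by blast
  then have "(INF j\<in>J. Inf (ereal ` dsupp (T j))) \<le> Inf (ereal ` dsupp (T j))"
    by (intro INF_lower)
  also have "\<dots> \<le> y" using \<open>y = ereal s\<close> \<open>s \<in> dsupp (T j)\<close> by (simp add: Inf_lower)
  finally show "(INF j\<in>J. Inf (ereal ` dsupp (T j))) \<le> y" .
qed

definition unit_root :: "nat \<Rightarrow> complex" where
  "unit_root n = exp (2 * of_real pi * \<i> / of_nat n)"

lemma unit_root_power: "unit_root n ^ m = exp (2 * of_real pi * \<i> * of_nat m / of_nat n)"
  unfolding unit_root_def exp_of_nat_mult[symmetric] by (simp add: field_simps)

lemma unit_root_power_eq_1_iff: "n \<ge> 1 \<Longrightarrow> unit_root n ^ m = 1 \<longleftrightarrow> n dvd m"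
  by (simp add: unit_root_power complex_root_unity_eq_1)

lemma unit_root_power_root_of_unity: "n \<ge> 1 \<Longrightarrow> (unit_root n ^ m) ^ n = 1"
  by (metis power_mult mult.commute dvd_triv_left unit_root_power_eq_1_iff)

lemma sum_unit_root_powers:
  assumes "n \<ge> 1"
  shows "(\<Sum>k<n. (unit_root n ^ m) ^ k) = (if n dvd m then of_nat n else 0)"
proof (cases "n dvd m")
  case True
  then have "unit_root n ^ m = 1" using assms by (simp add: unit_root_power_eq_1_iff)
  with True show ?thesis by simp
next
  case False
  then have "unit_root n ^ m \<noteq> 1" using assms by (simp add: unit_root_power_eq_1_iff)
  with False show ?thesis
    by (simp add: geometric_sum unit_root_power_root_of_unity[OF assms])
qed

lemma dft_inversion:
  assumes "n \<ge> 1" "j < n"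
  shows "(\<Sum>k<n. (unit_root n ^ (n - j)) ^ k * (\<Sum>l<n. (unit_root n ^ k) ^ l * a l))
           = of_nat n * a j"
proof -
  have dvd_iff: "n dvd l + (n - j) \<longleftrightarrow> l = j" if "l < n" for l
  proof
    assume "n dvd l + (n - j)"
    then obtain q where q: "l + (n - j) = n * q" by (elim dvdE)
    have "0 < n * q" "n * q < n * 2" using that assms unfolding q[symmetric] by auto
    then have "q = 1" by simp
    with q have "l + (n - j) = n" by simp
    then show "l = j" using that assms by simp
  qed (use assms in simp)
  have "(\<Sum>k<n. (unit_root n ^ (n - j)) ^ k * (\<Sum>l<n. (unit_root n ^ k) ^ l * a l))
      = (\<Sum>k<n. \<Sum>l<n. (unit_root n ^ (l + (n - j))) ^ k * a l)"
    unfolding sum_distrib_left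
    by (intro sum.cong refl)
      (simp add: power_add power_mult_distrib mult.commute flip: power_mult)
  also have "\<dots> = (\<Sum>l<n. (\<Sum>k<n. (unit_root n ^ (l + (n - j))) ^ k) * a l)"
    by (subst sum.swap) (simp add: sum_distrib_right)
  also have "\<dots> = (\<Sum>l<n. if l = j then of_nat n * a l else 0)"
    using assms(1) by (intro sum.cong) (simp_all add: sum_unit_root_powers dvd_iff)
  also have "\<dots> = of_nat n * a j" using assms(2) by simp
  finally show ?thesis .
qed

lemma dft_inversion_lincomb:
  fixes f :: "nat \<Rightarrow> 'a \<Rightarrow> complex"
  assumes "n \<ge> 1" "j < n"
  shows "f j = (\<lambda>x. \<Sum>k<n. ((unit_root n ^ (n - j)) ^ k / of_nat n) *
                              (\<Sum>l<n. (unit_root n ^ k) ^ l * f l x))"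
proof
  fix x
  have "f j x = (\<Sum>k<n. (unit_root n ^ (n - j)) ^ k * (\<Sum>l<n. (unit_root n ^ k) ^ l * f l x))
                  / of_nat n"
    using assms by (simp add: dft_inversion)
  also have "\<dots> = (\<Sum>k<n. ((unit_root n ^ (n - j)) ^ k / of_nat n) *
                              (\<Sum>l<n. (unit_root n ^ k) ^ l * f l x))"
    by (simp add: sum_divide_distrib)
  finally show "f j x = \<dots>" .
qed

theorem lemma1:
  fixes n :: nat and I :: "real set" and f :: "nat \<Rightarrow> (real \<Rightarrow> complex) \<Rightarrow> complex"
  assumes "n \<ge> 1"
    and "is_interval I" and "closed I"
    and "\<And>j. j < n \<Longrightarrow> f j \<in> cs_distributions I"
  shows "\<exists>\<alpha>::complex. \<alpha> ^ n = 1 \<and>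
           inf_supp (\<lambda>\<phi>. \<Sum>j<n. \<alpha> ^ j * f j \<phi>) = (MIN j\<in>{..<n}. inf_supp (f j))"
proof -
  define g where "g k = (\<lambda>\<phi>. \<Sum>j<n. (unit_root n ^ k) ^ j * f j \<phi>)" for k
  have ne: "{..<n} \<noteq> {}" using assms(1) by (simp add: lessThan_empty_iff)
  have MIN_eq_INF: "(MIN j\<in>{..<n}. h j) = (INF j\<in>{..<n}. h j)" for h :: "nat \<Rightarrow> ereal"
    using ne by (intro Min_Inf) simp_all
  have "(INF k\<in>{..<n}. inf_supp (g k)) \<in> (\<lambda>k. inf_supp (g k)) ` {..<n}"
    using Min_in[of "(\<lambda>k. inf_supp (g k)) ` {..<n}"] ne by (simp add: MIN_eq_INF)
  then obtain k where k_min: "inf_supp (g k) = (INF k\<in>{..<n}. inf_supp (g k))"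
    by (metis imageE)
  have "(INF k\<in>{..<n}. inf_supp (g k)) \<le> inf_supp (f j)" if "j < n" for j
    unfolding g_def by (subst dft_inversion_lincomb[OF assms(1) that]) (rule inf_supp_lincomb_ge, simp)
  then have "inf_supp (g k) \<le> (INF j\<in>{..<n}. inf_supp (f j))"
    unfolding k_min by (intro INF_greatest) simp
  moreover have "(INF j\<in>{..<n}. inf_supp (f j)) \<le> inf_supp (g k)"
    unfolding g_def by (rule inf_supp_lincomb_ge) simp
  ultimately have "inf_supp (g k) = (MIN j\<in>{..<n}. inf_supp (f j))"
    unfolding MIN_eq_INF by (rule antisym)
  then show ?thesis
    using unit_root_power_root_of_unity[OF assms(1)] unfolding g_def by blast
qed

end
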